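(* Let $r>1$ and let $k,\ell,m$ be arbitrary positive integers. Let $x_0$ be chosen uniformly at random from the vertex set of the $(k,\ell,m)$-megastar and run the Moran process with fitness $r$ on it with initial mutant $x_0$. Then the process goes extinct with probability at least $k/(2r(m+k))$.
   Context: Moran process: given a directed graph $G$ and fitness $r$, one vertex $x_0$ is a mutant, the rest non-mutants. At each step a vertex $v$ is chosen with probability proportional to fitness (mutants $r$, non-mutants $1$), an out-neighbour $w$ of $v$ is chosen uniformly at random and the state of $v$ is copied to $w$. Extinction: eventually no vertex is a mutant. The $(k,\ell,m)$-megastar: disjoint union of reservoirs $R_1,\dots,R_\ell$ (size $m$), cliques $K_1,\dots,K_\ell$ (size $k$), feeders $a_1,\dots,a_\ell$, and centre $v^*$; edges from $v^*$ to all reservoir vertices, from each vertex of $R_i$ to $a_i$, from $a_i$ to each vertex of $K_i$, both directions between distinct vertices of each $K_i$, and from every clique vertex to $v^*$. *)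

theory Defs
  imports Complex_Main
begin

text \<open>A directed graph is given by a finite vertex set V and an edge relation E
  (pairs (v,w) meaning an edge from v to w). A state of the Moran process is the
  set S of mutant vertices.\<close>

definition out_nbrs :: "'a set \<Rightarrow> ('a \<times> 'a) set \<Rightarrow> 'a \<Rightarrow> 'a set" where
  "out_nbrs V E v = {w \<in> V. (v, w) \<in> E}"

definition fitness :: "real \<Rightarrow> 'a set \<Rightarrow> 'a \<Rightarrow> real" where
  "fitness r S v = (if v \<in> S then r else 1)"

definition total_fitness :: "'a set \<Rightarrow> real \<Rightarrow> 'a set \<Rightarrow> real" where
  "total_fitness V r S = (\<Sum>v\<in>V. fitness r S v)"

text \<open>State after vertex v reproduces onto w.\<close>
definition moran_update :: "'a set \<Rightarrow> 'a \<Rightarrow> 'a \<Rightarrow> 'a set" where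
  "moran_update S v w = (if v \<in> S then insert w S else S - {w})"

text \<open>ext_by V E r n S = probability that the Moran process started in state S
  is in the (absorbing) extinct state {} after n steps, i.e. has gone extinct
  by time n.\<close>
fun ext_by :: "'a set \<Rightarrow> ('a \<times> 'a) set \<Rightarrow> real \<Rightarrow> nat \<Rightarrow> 'a set \<Rightarrow> real" where
  "ext_by V E r 0 S = (if S = {} then 1 else 0)"
| "ext_by V E r (Suc n) S =
     (\<Sum>v\<in>V. fitness r S v / total_fitness V r S *
        (\<Sum>w\<in>out_nbrs V E v. (1 / real (card (out_nbrs V E v))) *
            ext_by V E r n (moran_update S v w)))"

definition extinction_prob :: "'a set \<Rightarrow> ('a \<times> 'a) set \<Rightarrow> real \<Rightarrow> 'a set \<Rightarrow> real" where
  "extinction_prob V E r S = (SUP n. ext_by V E r n S)"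

datatype mvert = Centre | Res nat nat | Feeder nat | Cliq nat nat

definition megastar_V :: "nat \<Rightarrow> nat \<Rightarrow> nat \<Rightarrow> mvert set" where
  "megastar_V k l m =
     {Centre} \<union> {Res i j | i j. i < l \<and> j < m} \<union> {Feeder i | i. i < l}
       \<union> {Cliq i j | i j. i < l \<and> j < k}"

definition megastar_E :: "nat \<Rightarrow> nat \<Rightarrow> nat \<Rightarrow> (mvert \<times> mvert) set" where
  "megastar_E k l m =
     {(Centre, Res i j) | i j. i < l \<and> j < m}
     \<union> {(Res i j, Feeder i) | i j. i < l \<and> j < m}
     \<union> {(Feeder i, Cliq i j) | i j. i < l \<and> j < k}
     \<union> {(Cliq i j, Cliq i j') | i j j'. i < l \<and> j < k \<and> j' < k \<and> j \<noteq> j'}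
     \<union> {(Cliq i j, Centre) | i j. i < l \<and> j < k}"

end

theory Submission
  imports Defs
begin

(* A lone mutant at x is killed in one step with weight equal to the temperature of x, the sum
   of 1 / outdeg v over the other vertices v pointing to x, and the state {x} can only change
   otherwise when x itself reproduces, which has weight r.  Hence the mutant dies with probability
   at least t / (t + r) for any t below the temperature.  In the megastar the centre has
   temperature l, every feeder m and every clique vertex 1; averaging over the at most
   1 + l (m + 1 + k) vertices gives k / (2 r (m + k)). *)

lemma finite_out_nbrs: "finite V \<Longrightarrow> finite (out_nbrs V E v)"
  unfolding out_nbrs_def by simp

lemma ext_by_bounds:
  assumes "finite V" "r > 0"
  shows "0 \<le> ext_by V E r n S \<and> ext_by V E r n S \<le> 1"
proof (induction n arbitrary: S)
  case 0
  then show ?case by simp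
next
  case (Suc n)
  define T where "T = total_fitness V r S"
  have fitness_pos: "fitness r S v > 0" for v
    using assms by (simp add: fitness_def)
  define I where "I v = (\<Sum>w\<in>out_nbrs V E v.
      1 / real (card (out_nbrs V E v)) * ext_by V E r n (moran_update S v w))" for v
  have I: "0 \<le> I v \<and> I v \<le> 1" for v
  proof -
    have "0 \<le> I v"
      unfolding I_def using Suc.IH by (intro sum_nonneg mult_nonneg_nonneg) auto
    moreover have "I v \<le> (\<Sum>w\<in>out_nbrs V E v. 1 / real (card (out_nbrs V E v)))"
      unfolding I_def using Suc.IH by (intro sum_mono) (simp add: divide_right_mono)
    moreover have "\<dots> \<le> 1"
      using finite_out_nbrs[OF assms(1)] by (cases "out_nbrs V E v = {}") auto
    ultimately show ?thesis by linarith
  qed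
  have T_nonneg: "T \<ge> 0"
    unfolding T_def total_fitness_def using fitness_pos by (simp add: less_imp_le sum_nonneg)
  have "ext_by V E r (Suc n) S = (\<Sum>v\<in>V. fitness r S v / T * I v)"
    by (simp add: T_def I_def)
  moreover have "0 \<le> (\<Sum>v\<in>V. fitness r S v / T * I v)"
    using T_nonneg fitness_pos I by (intro sum_nonneg mult_nonneg_nonneg divide_nonneg_nonneg) (auto intro: less_imp_le)
  moreover have "(\<Sum>v\<in>V. fitness r S v / T * I v) \<le> (\<Sum>v\<in>V. fitness r S v / T)"
    using T_nonneg fitness_pos I by (intro sum_mono mult_left_le divide_nonneg_nonneg) (auto intro: less_imp_le)
  moreover have "(\<Sum>v\<in>V. fitness r S v / T) \<le> 1"
  proof (cases "V = {}")
    case False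
    then have "T > 0"
      unfolding T_def total_fitness_def using assms(1) fitness_pos by (simp add: sum_pos)
    then show ?thesis by (simp add: sum_divide_distrib[symmetric] T_def total_fitness_def)
  qed simp
  ultimately show ?case by linarith
qed

lemma extinction_prob_nonneg:
  assumes "finite V" "r > 0"
  shows "extinction_prob V E r S \<ge> 0"
proof -
  have "bdd_above (range (\<lambda>n. ext_by V E r n S))"
    using ext_by_bounds[OF assms] by (intro bdd_aboveI[where M = 1]) auto
  then show ?thesis
    unfolding extinction_prob_def using ext_by_bounds[OF assms] by (meson cSUP_upper2 UNIV_I)
qed

lemma ext_by_empty:
  assumes "finite V" "V \<noteq> {}" and no_sink: "\<And>v. v \<in> V \<Longrightarrow> out_nbrs V E v \<noteq> {}"
  shows "ext_by V E r n {} = 1"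
proof (induction n)
  case (Suc n)
  have "(\<Sum>w\<in>out_nbrs V E v. 1 / real (card (out_nbrs V E v)) * ext_by V E r n (moran_update {} v w)) = 1"
    if "v \<in> V" for v
    using Suc no_sink[OF that] finite_out_nbrs[OF assms(1)] by (simp add: moran_update_def)
  then have "ext_by V E r (Suc n) {} = (\<Sum>v\<in>V. 1 / real (card V))"
    by (simp add: fitness_def total_fitness_def)
  then show ?case using assms(1,2) by simp
qed simp

definition choice_prob :: "'a set \<Rightarrow> ('a \<times> 'a) set \<Rightarrow> 'a \<Rightarrow> 'a \<Rightarrow> real" where
  "choice_prob V E v x = (if x \<in> out_nbrs V E v then 1 / real (card (out_nbrs V E v)) else 0)"

definition temperature :: "'a set \<Rightarrow> ('a \<times> 'a) set \<Rightarrow> 'a \<Rightarrow> real" where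
  "temperature V E x = (\<Sum>v\<in>V - {x}. choice_prob V E v x)"

lemma choice_prob_nonneg: "choice_prob V E v x \<ge> 0"
  by (simp add: choice_prob_def)

lemma choice_prob_le_one:
  assumes "finite V" "out_nbrs V E v \<noteq> {}"
  shows "choice_prob V E v x \<le> 1"
proof -
  have "card (out_nbrs V E v) \<ge> 1"
    using assms finite_out_nbrs[OF assms(1)] by (simp add: Suc_leI card_gt_0_iff)
  then show ?thesis by (simp add: choice_prob_def)
qed

lemma temperature_nonneg: "temperature V E x \<ge> 0"
  unfolding temperature_def by (intro sum_nonneg choice_prob_nonneg)

lemma temperature_le:
  assumes "finite V" "x \<in> V" "\<And>v. v \<in> V \<Longrightarrow> out_nbrs V E v \<noteq> {}"
  shows "temperature V E x \<le> real (card V) - 1"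
proof -
  have "temperature V E x \<le> (\<Sum>v\<in>V - {x}. 1)"
    unfolding temperature_def using assms by (intro sum_mono choice_prob_le_one) auto
  also have "\<dots> = real (card V) - 1"
    using assms(1,2) card_gt_0_iff[of V] by (auto simp: card_Diff_singleton of_nat_diff)
  finally show ?thesis .
qed

lemma temperature_ge_sum:
  assumes "finite V" "D \<subseteq> V - {x}"
  shows "(\<Sum>v\<in>D. choice_prob V E v x) \<le> temperature V E x"
  unfolding temperature_def using assms by (intro sum_mono2 choice_prob_nonneg) auto

lemma resident_offspring_sum:
  assumes "finite V" and no_sink: "\<And>v. v \<in> V \<Longrightarrow> out_nbrs V E v \<noteq> {}"
    and "v \<in> V" "v \<noteq> x"
  shows "(\<Sum>w\<in>out_nbrs V E v. 1 / real (card (out_nbrs V E v)) * ext_by V E r n (moran_update {x} v w))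
       = ext_by V E r n {x} + choice_prob V E v x * (1 - ext_by V E r n {x})"
proof -
  let ?O = "out_nbrs V E v" and ?p = "ext_by V E r n {x}"
  have fin: "finite ?O" using finite_out_nbrs[OF assms(1)] .
  have card_pos: "card ?O > 0" using fin no_sink[OF assms(3)] by (simp add: card_gt_0_iff)
  have update: "ext_by V E r n (moran_update {x} v w) = (if w = x then 1 else ?p)" for w
    using assms ext_by_empty[OF assms(1) _ no_sink] by (auto simp: moran_update_def)
  show ?thesis
  proof (cases "x \<in> ?O")
    case True
    have "(\<Sum>w\<in>?O. 1 / real (card ?O) * ext_by V E r n (moran_update {x} v w))
        = 1 / real (card ?O) + (\<Sum>w\<in>?O - {x}. 1 / real (card ?O) * ?p)"
      using fin True by (simp add: update sum.remove)
    also have "\<dots> = 1 / real (card ?O) + (real (card ?O) - 1) / real (card ?O) * ?p"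
      using fin True card_pos by (simp add: card_Diff_singleton of_nat_diff)
    finally show ?thesis
      using True card_pos by (simp add: choice_prob_def field_simps)
  next
    case False
    then have "(\<Sum>w\<in>?O. 1 / real (card ?O) * ext_by V E r n (moran_update {x} v w))
        = (\<Sum>w\<in>?O. 1 / real (card ?O) * ?p)"
      by (intro sum.cong) (auto simp: update)
    then show ?thesis using False card_pos by (simp add: choice_prob_def)
  qed
qed

text \<open>Dropping the steps in which the mutant reproduces gives the lower bound.\<close>
lemma ext_by_singleton_Suc_ge:
  fixes n :: nat
  assumes "finite V" "r > 0" "x \<in> V" and no_sink: "\<And>v. v \<in> V \<Longrightarrow> out_nbrs V E v \<noteq> {}"
  defines "p \<equiv> ext_by V E r n {x}" and "N \<equiv> real (card V)"
  shows "ext_by V E r (Suc n) {x}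
           \<ge> ((N - 1) * p + temperature V E x * (1 - p)) / (N - 1 + r)"
proof -
  have card_V: "real (card (V - {x})) = N - 1"
    using assms(1,3) card_gt_0_iff[of V] by (auto simp: N_def card_Diff_singleton of_nat_diff)
  have total: "total_fitness V r {x} = N - 1 + r"
    using assms(1,3) card_V by (simp add: total_fitness_def sum.remove fitness_def)
  define F where "F v = fitness r {x} v / (N - 1 + r) * (\<Sum>w\<in>out_nbrs V E v.
      1 / real (card (out_nbrs V E v)) * ext_by V E r n (moran_update {x} v w))" for v
  have split: "ext_by V E r (Suc n) {x} = F x + (\<Sum>v\<in>V - {x}. F v)"
    using assms(1,3) by (simp add: F_def total sum.remove)
  have "N - 1 + r > 0"
    using card_V assms(2) by (metis add_nonneg_pos of_nat_0_le_iff)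
  then have "F x \<ge> 0"
    unfolding F_def using ext_by_bounds[OF assms(1,2)] assms(2)
    by (intro mult_nonneg_nonneg sum_nonneg divide_nonneg_nonneg) (auto simp: fitness_def)
  moreover have "(\<Sum>v\<in>V - {x}. F v) = (\<Sum>v\<in>V - {x}. (p + choice_prob V E v x * (1 - p)) / (N - 1 + r))"
    using resident_offspring_sum[OF assms(1) no_sink] by (intro sum.cong) (auto simp: F_def fitness_def p_def)
  moreover have "\<dots> = ((N - 1) * p + temperature V E x * (1 - p)) / (N - 1 + r)"
    by (simp add: sum_divide_distrib[symmetric] sum.distrib sum_distrib_right[symmetric]
        temperature_def card_V)
  ultimately show ?thesis using split by linarith
qed

lemma affine_recurrence_lower_bound:
  fixes p :: "nat \<Rightarrow> real"
  assumes "A \<ge> 0" "d \<ge> 0" "r > 0" "p 0 \<ge> 0"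
    and step: "\<And>n. p (Suc n) \<ge> (A * p n + d) / (A + d + r)"
  shows "p n \<ge> d / (d + r) * (1 - (A / (A + d + r)) ^ n)"
proof (induction n)
  case 0
  then show ?case using assms(4) by simp
next
  case (Suc n)
  define c where "c = d / (d + r)"
  define T where "T = A + d + r"
  have T: "T > 0" using assms(1-3) by (simp add: T_def)
  have "(A * (c * (1 - (A / T) ^ n)) + d) / T \<le> (A * p n + d) / T"
    using Suc assms(1) T by (intro divide_right_mono add_right_mono mult_left_mono) (auto simp: c_def T_def)
  also have "\<dots> \<le> p (Suc n)" using step by (simp add: T_def)
  finally have bound: "(A * (c * (1 - (A / T) ^ n)) + d) / T \<le> p (Suc n)" .
  have "(A * (c * (1 - (A / T) ^ n)) + d) / T = (A * c + d) / T - c * (A / T) ^ Suc n"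
    using T by (simp add: field_simps)
  also have "c * (d + r) = d" using assms(2,3) by (simp add: c_def)
  then have "(A * c + d) / T = c" using T by (simp add: T_def field_simps)
  finally show ?case using bound by (simp add: c_def T_def right_diff_distrib)
qed

lemma SUP_ge_limit_of_lower_bounds:
  fixes p :: "nat \<Rightarrow> real"
  assumes "bdd_above (range p)" and "\<And>n. p n \<ge> c * (1 - s ^ n)" and "0 \<le> s" "s < 1"
  shows "(SUP n. p n) \<ge> c"
proof (rule LIMSEQ_le_const2)
  have "(\<lambda>n. c * (1 - s ^ n)) \<longlonglongrightarrow> c * (1 - 0)"
    using assms(3,4) by (intro tendsto_intros LIMSEQ_power_zero) auto
  then show "(\<lambda>n. c * (1 - s ^ n)) \<longlonglongrightarrow> c" by simp
  show "\<exists>N. \<forall>n\<ge>N. c * (1 - s ^ n) \<le> (SUP n. p n)"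
    using assms(1,2) by (meson cSUP_upper2 UNIV_I)
qed

lemma extinction_prob_singleton_ge:
  assumes "finite V" "r > 0" "x \<in> V" and no_sink: "\<And>v. v \<in> V \<Longrightarrow> out_nbrs V E v \<noteq> {}"
    and "0 \<le> t" "t \<le> temperature V E x"
  shows "extinction_prob V E r {x} \<ge> t / (t + r)"
proof -
  define d where "d = temperature V E x"
  define A where "A = real (card V) - 1 - d"
  define p where "p n = ext_by V E r n {x}" for n
  have A: "A \<ge> 0" using temperature_le[OF assms(1,3) no_sink] by (simp add: A_def d_def)
  have d: "d \<ge> 0" by (simp add: d_def temperature_nonneg)
  have "p n \<ge> d / (d + r) * (1 - (A / (A + d + r)) ^ n)" for n
  proof (rule affine_recurrence_lower_bound[OF A d assms(2)])
    show "0 \<le> p 0" using ext_by_bounds[OF assms(1,2)] by (simp add: p_def)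
    show "p (Suc n) \<ge> (A * p n + d) / (A + d + r)" for n
      using ext_by_singleton_Suc_ge[OF assms(1-3) no_sink, of n]
      by (simp add: A_def d_def p_def algebra_simps)
  qed
  moreover have "bdd_above (range p)"
    using ext_by_bounds[OF assms(1,2)] by (intro bdd_aboveI[where M = 1]) (auto simp: p_def)
  ultimately have "(SUP n. p n) \<ge> d / (d + r)"
    using A d assms(2) by (intro SUP_ge_limit_of_lower_bounds[where s = "A / (A + d + r)"]) auto
  moreover have "t / (t + r) \<le> d / (d + r)"
    using assms(2,5,6) by (simp add: divide_simps) (simp add: algebra_simps mult_right_mono d_def)
  ultimately show ?thesis by (simp add: extinction_prob_def p_def)
qed

lemma megastar_V_eq:
  "megastar_V k l m = insert Centre ((\<lambda>(i, j). Res i j) ` ({..<l} \<times> {..<m}) \<union> Feeder ` {..<l}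
     \<union> (\<lambda>(i, j). Cliq i j) ` ({..<l} \<times> {..<k}))"
  unfolding megastar_V_def by auto

lemma finite_megastar_V: "finite (megastar_V k l m)"
  unfolding megastar_V_eq by simp

lemma card_megastar_V_le: "card (megastar_V k l m) \<le> 1 + l * m + l + l * k"
proof -
  have "card ((\<lambda>(i, j). Res i j) ` ({..<l} \<times> {..<m})) \<le> l * m"
    by (rule order_trans[OF card_image_le]) auto
  moreover have "card (Feeder ` {..<l}) \<le> l"
    by (rule order_trans[OF card_image_le]) auto
  moreover have "card ((\<lambda>(i, j). Cliq i j) ` ({..<l} \<times> {..<k})) \<le> l * k"
    by (rule order_trans[OF card_image_le]) auto
  ultimately have "card ((\<lambda>(i, j). Res i j) ` ({..<l} \<times> {..<m}) \<union> Feeder ` {..<l}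
      \<union> (\<lambda>(i, j). Cliq i j) ` ({..<l} \<times> {..<k})) \<le> l * m + l + l * k"
    by (meson add_mono card_Un_le order_trans)
  then show ?thesis
    unfolding megastar_V_eq by (subst card_insert_disjoint) auto
qed

lemma out_nbrs_Centre:
  "out_nbrs (megastar_V k l m) (megastar_E k l m) Centre = (\<lambda>(i, j). Res i j) ` ({..<l} \<times> {..<m})"
  unfolding out_nbrs_def megastar_V_def megastar_E_def by auto

lemma out_nbrs_Res:
  "i < l \<Longrightarrow> j < m \<Longrightarrow> out_nbrs (megastar_V k l m) (megastar_E k l m) (Res i j) = {Feeder i}"
  unfolding out_nbrs_def megastar_V_def megastar_E_def by auto

lemma out_nbrs_Feeder:
  "i < l \<Longrightarrow> out_nbrs (megastar_V k l m) (megastar_E k l m) (Feeder i) = Cliq i ` {..<k}"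
  unfolding out_nbrs_def megastar_V_def megastar_E_def by auto

lemma out_nbrs_Cliq:
  "i < l \<Longrightarrow> j < k \<Longrightarrow> out_nbrs (megastar_V k l m) (megastar_E k l m) (Cliq i j)
     = insert Centre (Cliq i ` ({..<k} - {j}))"
  unfolding out_nbrs_def megastar_V_def megastar_E_def by auto

lemma card_out_nbrs_Feeder:
  "i < l \<Longrightarrow> card (out_nbrs (megastar_V k l m) (megastar_E k l m) (Feeder i)) = k"
  by (simp add: out_nbrs_Feeder card_image inj_on_def)

lemma card_out_nbrs_Cliq:
  assumes "i < l" "j < k"
  shows "card (out_nbrs (megastar_V k l m) (megastar_E k l m) (Cliq i j)) = k"
proof -
  have "card (Cliq i ` ({..<k} - {j})) = k - 1"
    using assms by (simp add: card_image inj_on_def)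
  then show ?thesis using assms by (auto simp: out_nbrs_Cliq card_insert_if)
qed

lemma megastar_no_sink:
  assumes "k > 0" "l > 0" "m > 0" "v \<in> megastar_V k l m"
  shows "out_nbrs (megastar_V k l m) (megastar_E k l m) v \<noteq> {}"
proof -
  have "v = Centre \<or> (\<exists>i j. i < l \<and> j < m \<and> v = Res i j) \<or> (\<exists>i. i < l \<and> v = Feeder i)
      \<or> (\<exists>i j. i < l \<and> j < k \<and> v = Cliq i j)"
    using assms(4) by (auto simp: megastar_V_def)
  then show ?thesis
    using assms(1-3) by (auto simp: out_nbrs_Centre out_nbrs_Res out_nbrs_Feeder out_nbrs_Cliq)
qed

lemma choice_prob_Res_Feeder:
  "i < l \<Longrightarrow> j < m \<Longrightarrow> choice_prob (megastar_V k l m) (megastar_E k l m) (Res i j) (Feeder i) = 1"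
  by (simp add: choice_prob_def out_nbrs_Res)

lemma choice_prob_Feeder_Cliq:
  "i < l \<Longrightarrow> j < k \<Longrightarrow> choice_prob (megastar_V k l m) (megastar_E k l m) (Feeder i) (Cliq i j) = 1 / k"
  unfolding choice_prob_def card_out_nbrs_Feeder by (simp add: out_nbrs_Feeder)

lemma choice_prob_Cliq_Centre:
  assumes "i < l" "j < k"
  shows "choice_prob (megastar_V k l m) (megastar_E k l m) (Cliq i j) Centre = 1 / k"
  unfolding choice_prob_def card_out_nbrs_Cliq[OF assms] using assms by (simp add: out_nbrs_Cliq)

lemma choice_prob_Cliq_Cliq:
  assumes "i < l" "j < k" "j' < k" "j \<noteq> j'"
  shows "choice_prob (megastar_V k l m) (megastar_E k l m) (Cliq i j) (Cliq i j') = 1 / k"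
  unfolding choice_prob_def card_out_nbrs_Cliq[OF assms(1,2)] using assms by (simp add: out_nbrs_Cliq)

lemma temperature_Centre:
  assumes "k > 0"
  shows "temperature (megastar_V k l m) (megastar_E k l m) Centre \<ge> real l"
proof -
  define D where "D = (\<lambda>(i, j). Cliq i j) ` ({..<l} \<times> {..<k})"
  have "card D = l * k" unfolding D_def by (subst card_image) (auto simp: inj_on_def)
  then have "real l = (\<Sum>v\<in>D. 1 / real k)" using assms by simp
  also have "\<dots> = (\<Sum>v\<in>D. choice_prob (megastar_V k l m) (megastar_E k l m) v Centre)"
    by (intro sum.cong) (auto simp: D_def choice_prob_Cliq_Centre)
  also have "\<dots> \<le> temperature (megastar_V k l m) (megastar_E k l m) Centre"
    by (rule temperature_ge_sum[OF finite_megastar_V]) (auto simp: D_def megastar_V_def)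
  finally show ?thesis .
qed

lemma temperature_Feeder:
  assumes "i < l"
  shows "temperature (megastar_V k l m) (megastar_E k l m) (Feeder i) \<ge> real m"
proof -
  define D where "D = Res i ` {..<m}"
  have "card D = m" unfolding D_def by (simp add: card_image inj_on_def)
  then have "real m = (\<Sum>v\<in>D. 1)" by simp
  also have "\<dots> = (\<Sum>v\<in>D. choice_prob (megastar_V k l m) (megastar_E k l m) v (Feeder i))"
    using assms by (intro sum.cong) (auto simp: D_def choice_prob_Res_Feeder)
  also have "\<dots> \<le> temperature (megastar_V k l m) (megastar_E k l m) (Feeder i)"
    by (rule temperature_ge_sum[OF finite_megastar_V]) (use assms in \<open>auto simp: D_def megastar_V_def\<close>)
  finally show ?thesis .
qed

lemma temperature_Cliq:
  assumes "i < l" "j < k"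
  shows "temperature (megastar_V k l m) (megastar_E k l m) (Cliq i j) \<ge> 1"
proof -
  define D where "D = insert (Feeder i) (Cliq i ` ({..<k} - {j}))"
  have "card D = k"
    using assms unfolding D_def by (auto simp: card_insert_if card_image inj_on_def)
  then have "1 = (\<Sum>v\<in>D. 1 / real k)" using assms by simp
  also have "\<dots> = (\<Sum>v\<in>D. choice_prob (megastar_V k l m) (megastar_E k l m) v (Cliq i j))"
    using assms by (intro sum.cong) (auto simp: D_def choice_prob_Feeder_Cliq intro!: choice_prob_Cliq_Cliq[symmetric])
  also have "\<dots> \<le> temperature (megastar_V k l m) (megastar_E k l m) (Cliq i j)"
    by (rule temperature_ge_sum[OF finite_megastar_V]) (use assms in \<open>auto simp: D_def megastar_V_def\<close>)
  finally show ?thesis .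
qed

lemma sum_megastar_V_ge:
  fixes f :: "mvert \<Rightarrow> real"
  assumes "\<And>v. v \<in> megastar_V k l m \<Longrightarrow> f v \<ge> 0"
  shows "f Centre + (\<Sum>i<l. f (Feeder i)) + (\<Sum>i<l. \<Sum>j<k. f (Cliq i j)) \<le> (\<Sum>v\<in>megastar_V k l m. f v)"
proof -
  define F where "F = Feeder ` {..<l}"
  define C where "C = (\<lambda>(i, j). Cliq i j) ` ({..<l} \<times> {..<k})"
  have "(\<Sum>i<l. f (Feeder i)) = sum f F"
    unfolding F_def by (subst sum.reindex) (auto simp: inj_on_def)
  moreover have "(\<Sum>i<l. \<Sum>j<k. f (Cliq i j)) = sum f C"
    unfolding C_def by (subst sum.reindex) (auto simp: inj_on_def sum.cartesian_product split_def)
  moreover have "sum f (insert Centre (F \<union> C)) = f Centre + (sum f F + sum f C)"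
    by (subst sum.insert) (auto simp: F_def C_def intro!: sum.union_disjoint)
  moreover have "sum f (insert Centre (F \<union> C)) \<le> (\<Sum>v\<in>megastar_V k l m. f v)"
    using assms finite_megastar_V by (intro sum_mono2) (auto simp: F_def C_def megastar_V_def)
  ultimately show ?thesis by simp
qed

lemma half_inverse_le_ratio:
  fixes r x :: real
  assumes "r > 1" "x \<ge> 1"
  shows "1 / (2 * r) \<le> x / (x + r)"
proof -
  have "(r - 1) * (x - 1) \<ge> 0" using assms by simp
  moreover have "r * x \<ge> 1" using assms mult_mono[of 1 r 1 x] by simp
  ultimately have "x + r \<le> 2 * r * x" by (simp add: algebra_simps)
  then show ?thesis using assms by (simp add: divide_simps mult.commute mult.left_commute)
qed

lemma megastar_bound_arith:
  fixes k l m r :: real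
  assumes "r > 1" "k \<ge> 1" "l \<ge> 1" "m \<ge> 1"
  shows "(1 + l * m + l + l * k) * (k / (2 * r * (m + k)))
           \<le> l / (l + r) + l * (m / (m + r)) + l * k * (1 / (1 + r))"
proof -
  have "r > 0" "m + k > 0" using assms by auto
  then have "(1 + l * m + l + l * k) * (k / (2 * r * (m + k)))
      = l * k * (1 / (2 * r)) + (1 + l) * (k / (m + k)) * (1 / (2 * r))"
    by (simp add: divide_simps) (simp add: algebra_simps)
  also have "\<dots> \<le> l * k * (1 / (2 * r)) + (1 + l) * (1 / (2 * r))"
    using assms by (intro add_left_mono mult_right_mono mult_left_le) auto
  also have "\<dots> = l * k * (1 / (2 * r)) + l * (1 / (2 * r)) + 1 / (2 * r)"
    by (simp add: algebra_simps add_divide_distrib)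
  also have "\<dots> \<le> l * k * (1 / (1 + r)) + l * (m / (m + r)) + l / (l + r)"
  proof (intro add_mono mult_left_mono)
    show "1 / (2 * r) \<le> 1 / (1 + r)" using assms(1) by (simp add: frac_le)
  qed (use assms half_inverse_le_ratio[OF assms(1)] in auto)
  finally show ?thesis by simp
qed

theorem lemma7p1:
  fixes r :: real and k l m :: nat
  assumes "r > 1" and "k > 0" and "l > 0" and "m > 0"
  shows "(\<Sum>x0\<in>megastar_V k l m.
            extinction_prob (megastar_V k l m) (megastar_E k l m) r {x0})
           / real (card (megastar_V k l m))
         \<ge> real k / (2 * r * (real m + real k))"
proof -
  define P where "P x = extinction_prob (megastar_V k l m) (megastar_E k l m) r {x}" for x
  define q where "q = real k / (2 * r * (real m + real k))"
  have r: "r > 0" using assms(1) by simp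
  have P_ge: "t / (t + r) \<le> P x"
    if "x \<in> megastar_V k l m" "0 \<le> t" "t \<le> temperature (megastar_V k l m) (megastar_E k l m) x" for x t
    unfolding P_def
    by (rule extinction_prob_singleton_ge[OF finite_megastar_V r that(1) megastar_no_sink[OF assms(2-4)] that(2,3)])
  have "real (card (megastar_V k l m)) * q \<le> (1 + real l * real m + real l + real l * real k) * q"
    using card_megastar_V_le[of k l m] assms by (intro mult_right_mono) (auto simp: q_def simp flip: of_nat_mult of_nat_add)
  also have "\<dots> \<le> real l / (real l + r) + real l * (real m / (real m + r)) + real l * real k * (1 / (1 + r))"
    unfolding q_def using assms by (intro megastar_bound_arith) auto
  also have "\<dots> \<le> P Centre + (\<Sum>i<l. P (Feeder i)) + (\<Sum>i<l. \<Sum>j<k. P (Cliq i j))"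
  proof (intro add_mono)
    show "real l / (real l + r) \<le> P Centre"
      using temperature_Centre assms(2) by (intro P_ge) (auto simp: megastar_V_def)
    have "real m / (real m + r) \<le> P (Feeder i)" if "i < l" for i
      using temperature_Feeder that by (intro P_ge) (auto simp: megastar_V_def)
    then show "real l * (real m / (real m + r)) \<le> (\<Sum>i<l. P (Feeder i))"
      using sum_bounded_below[of "{..<l}" "real m / (real m + r)" "\<lambda>i. P (Feeder i)"] by simp
    have "1 / (1 + r) \<le> P (Cliq i j)" if "i < l" "j < k" for i j
      using temperature_Cliq that by (intro P_ge) (auto simp: megastar_V_def)
    then have "real k * (1 / (1 + r)) \<le> (\<Sum>j<k. P (Cliq i j))" if "i < l" for i
      using that sum_bounded_below[of "{..<k}" "1 / (1 + r)" "\<lambda>j. P (Cliq i j)"] by simp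
    then show "real l * real k * (1 / (1 + r)) \<le> (\<Sum>i<l. \<Sum>j<k. P (Cliq i j))"
      using sum_bounded_below[of "{..<l}" "real k * (1 / (1 + r))" "\<lambda>i. \<Sum>j<k. P (Cliq i j)"]
      by (simp add: mult.assoc)
  qed
  also have "\<dots> \<le> (\<Sum>x\<in>megastar_V k l m. P x)"
    using extinction_prob_nonneg[OF finite_megastar_V r] by (intro sum_megastar_V_ge) (simp add: P_def)
  finally show ?thesis
    using finite_megastar_V[of k l m] by (simp add: P_def q_def pos_le_divide_eq card_gt_0_iff megastar_V_def mult.commute)
qed

end
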